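(* Let $\mathcal{L}_1,\mathcal{L}_2$ be objects of $\mathbf{Cal^0_{Sym}}$ that are DAC-lattices, and let $f\in\mathbf{Cal^0_{Sym}}(\mathcal{L}_1,\mathcal{L}_2^{\mathrm{op}})$ be such that $f(\mathcal{L}_1)$ has length $2$. Then the coatom $X:=\bigcup\{\{p\}\times\Sigma[f(p)]\,;\,p\in\Sigma_1\}$ of $\mathcal{L}_1\circledast\mathcal{L}_2$ (where $f(p)$ is regarded as an element of $\mathcal{L}_2$) is a $\ast$-coatom, i.e. there exist distinct coatoms $x_1,y_1$ of $\mathcal{L}_1$, distinct coatoms $x_2,y_2$ of $\mathcal{L}_2$ and a bijection $h:\Sigma'[x_1\wedge y_1]\to\Sigma'[x_2\wedge y_2]$ such that $X=\bigcup\{\Sigma[z]\times\Sigma[h(z)];z\in\Sigma'[x_1\wedge y_1]\}$.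
   Context: Lattice notation: $\Sigma_i,\Sigma_i'$ atoms and coatoms; $\Sigma[a]$ atoms below $a$, $\Sigma'[a]$ coatoms above $a$; $\mathsf{Cl}(\omega)=\{\Sigma[a];a\in\omega\}$; $\mathcal{L}^{\mathrm{op}}$ the dual lattice; $f^\circ(b):=\bigvee\{a;f(a)\le b\}$. A DAC-lattice is a lattice with $0,1$ such that $\mathcal{L}$ and $\mathcal{L}^{\mathrm{op}}$ are atomistic with the covering property. $\mathbf{Cal^0_{Sym}}$: objects are complete atomistic coatomistic lattices with $\Sigma[x]\cup\Sigma[y]\ne\Sigma$ for all coatoms $x,y$ and $\Sigma'[p]\cup\Sigma'[q]\ne\Sigma'$ for all atoms $p,q$; arrows preserve arbitrary joins, send atoms to atoms or $0$, with $f^\circ$ sending coatoms to coatoms or $1$. $\Sigma'_\circledast$ is the set of $R\subsetneqq\Sigma_1\times\Sigma_2$ such that for all $(p_1,p_2)$, $\{q_1;(q_1,p_2)\in R\}\in\mathsf{Cl}(\Sigma_1'\cup\{1\})$ and $\{q_2;(p_1,q_2)\in R\}\in\mathsf{Cl}(\Sigma_2'\cup\{1\})$; $\mathcal{L}_1\circledast\mathcal{L}_2:=\{\bigcap\omega;\omega\subseteq\Sigma'_\circledast\cup\{\Sigma_1\times\Sigma_2\}\}$. The length of a subset is the supremum of lengths of its chains (a chain $c_0<\dots<c_n$ has length $n$). *)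

theory Defs
  imports Main "HOL-Library.Dual_Ordered_Lattice" "HOL-Library.Extended_Nat"
begin

definition atom :: "'a::complete_lattice \<Rightarrow> bool" where
  "atom p \<longleftrightarrow> bot < p \<and> (\<forall>x. bot < x \<and> x \<le> p \<longrightarrow> x = p)"

definition coatom :: "'a::complete_lattice \<Rightarrow> bool" where
  "coatom x \<longleftrightarrow> x < top \<and> (\<forall>y. x \<le> y \<and> y < top \<longrightarrow> y = x)"

definition Atoms :: "'a::complete_lattice set" where
  "Atoms = {p. atom p}"

definition Coatoms :: "'a::complete_lattice set" where
  "Coatoms = {x. coatom x}"

definition atoms_below :: "'a::complete_lattice \<Rightarrow> 'a set" where
  "atoms_below a = {p. atom p \<and> p \<le> a}"

definition coatoms_above :: "'a::complete_lattice \<Rightarrow> 'a set" where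
  "coatoms_above a = {x. coatom x \<and> a \<le> x}"

definition Cl :: "'a::complete_lattice set \<Rightarrow> 'a set set" where
  "Cl \<omega> = atoms_below ` \<omega>"

definition covers :: "'a::order \<Rightarrow> 'a \<Rightarrow> bool" where
  "covers a b \<longleftrightarrow> a < b \<and> (\<forall>c. a \<le> c \<and> c \<le> b \<longrightarrow> c = a \<or> c = b)"

definition atomistic :: "'a::complete_lattice itself \<Rightarrow> bool" where
  "atomistic _ \<longleftrightarrow> (\<forall>a::'a. a = Sup (atoms_below a))"

definition coatomistic :: "'a::complete_lattice itself \<Rightarrow> bool" where
  "coatomistic _ \<longleftrightarrow> (\<forall>a::'a. a = Inf (coatoms_above a))"

definition covering_property :: "'a::complete_lattice itself \<Rightarrow> bool" where
  "covering_property _ \<longleftrightarrow>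
     (\<forall>(a::'a) p. atom p \<and> \<not> p \<le> a \<longrightarrow> covers a (sup a p))"

definition DAC_lattice :: "'a::complete_lattice itself \<Rightarrow> bool" where
  "DAC_lattice T \<longleftrightarrow> atomistic T \<and> covering_property T \<and>
     atomistic TYPE('a dual) \<and> covering_property TYPE('a dual)"

definition Cal0Sym_obj :: "'a::complete_lattice itself \<Rightarrow> bool" where
  "Cal0Sym_obj T \<longleftrightarrow> atomistic T \<and> coatomistic T \<and>
     (\<forall>x y::'a. coatom x \<and> coatom y \<longrightarrow> atoms_below x \<union> atoms_below y \<noteq> Atoms) \<and>
     (\<forall>p q::'a. atom p \<and> atom q \<longrightarrow> coatoms_above p \<union> coatoms_above q \<noteq> Coatoms)"

definition resid :: "('a::complete_lattice \<Rightarrow> 'b::complete_lattice) \<Rightarrow> 'b \<Rightarrow> 'a" where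
  "resid f b = Sup {a. f a \<le> b}"

definition Cal0Sym_arrow :: "('a::complete_lattice \<Rightarrow> 'b::complete_lattice) \<Rightarrow> bool" where
  "Cal0Sym_arrow f \<longleftrightarrow>
     (\<forall>S. f (Sup S) = Sup (f ` S)) \<and>
     (\<forall>p. atom p \<longrightarrow> atom (f p) \<or> f p = bot) \<and>
     (\<forall>x. coatom x \<longrightarrow> coatom (resid f x) \<or> resid f x = top)"

definition chain_of_length :: "'a::order set \<Rightarrow> nat \<Rightarrow> bool" where
  "chain_of_length S n \<longleftrightarrow>
     (\<exists>c::nat \<Rightarrow> 'a. (\<forall>i\<le>n. c i \<in> S) \<and> (\<forall>i<n. c i < c (Suc i)))"

definition set_length :: "'a::order set \<Rightarrow> enat" where
  "set_length S = Sup {enat n | n. chain_of_length S n}"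

definition Sigma'_tensor :: "('a::complete_lattice \<times> 'b::complete_lattice) set set" where
  "Sigma'_tensor = {R. R \<subset> Atoms \<times> Atoms \<and>
     (\<forall>p1\<in>Atoms. \<forall>p2\<in>Atoms.
        {q1. (q1, p2) \<in> R} \<in> Cl (Coatoms \<union> {top}) \<and>
        {q2. (p1, q2) \<in> R} \<in> Cl (Coatoms \<union> {top}))}"

text \<open>intersections are taken inside \<Sigma>1 \<times> \<Sigma>2 (so the empty intersection is \<Sigma>1 \<times> \<Sigma>2)\<close>
definition tensor :: "('a::complete_lattice \<times> 'b::complete_lattice) set set" where
  "tensor = {(Atoms \<times> Atoms) \<inter> \<Inter>\<omega> | \<omega>. \<omega> \<subseteq> Sigma'_tensor \<union> {Atoms \<times> Atoms}}"

definition tensor_coatom :: "('a::complete_lattice \<times> 'b::complete_lattice) set \<Rightarrow> bool" where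
  "tensor_coatom X \<longleftrightarrow> X \<in> tensor \<and> X \<noteq> Atoms \<times> Atoms \<and>
     (\<forall>Y\<in>tensor. X \<subseteq> Y \<longrightarrow> Y = X \<or> Y = Atoms \<times> Atoms)"

end

theory Submission
  imports Defs
begin

(*
  Write g a = undual (f a). Then g turns joins into meets and atoms into coatoms or top, and its
  adjoint g' (a <= g' b iff b <= g a) is the residual of f, so it too sends atoms to coatoms or top.
  Hence the relation X = {(p, q). q <= g p} has closed rows Sigma[g p] and closed columns
  Sigma[g' q]. If a closed relation R strictly contains X, the row and the column through any point
  of R outside X are full; since the atoms below two coatoms never exhaust Sigma_2, such points
  spread over the whole of Sigma_1 x Sigma_2, so X is a coatom of the tensor product.

  Length 2 of the image forces every value of g to be top, m = g top, or a coatom. Two distinct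
  coatom values meet in m, and the covering property of the dual lattice shows that they are
  exactly the coatoms above m. Symmetrically g' maps them onto the coatoms above g' top, where g
  inverts g'; this bijection displays X as a *-coatom.
*)

lemma mem_Atoms [simp]: "p \<in> Atoms \<longleftrightarrow> atom p"
  by (simp add: Atoms_def)

lemma mem_Coatoms [simp]: "x \<in> Coatoms \<longleftrightarrow> coatom x"
  by (simp add: Coatoms_def)

lemma mem_atoms_below [simp]: "p \<in> atoms_below a \<longleftrightarrow> atom p \<and> p \<le> a"
  by (simp add: atoms_below_def)

lemma mem_coatoms_above [simp]: "x \<in> coatoms_above a \<longleftrightarrow> coatom x \<and> a \<le> x"
  by (simp add: coatoms_above_def)

lemma atoms_below_top [simp]: "atoms_below top = Atoms"
  by auto

lemma coatom_neq_top: "coatom x \<Longrightarrow> x \<noteq> top"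
  by (auto simp: coatom_def)

lemma coatom_le_imp_eq: "coatom x \<Longrightarrow> x \<le> y \<Longrightarrow> y \<noteq> top \<Longrightarrow> y = x"
  by (simp add: coatom_def top.not_eq_extremum)

lemma coatom_less_imp_top: "coatom x \<Longrightarrow> x < y \<Longrightarrow> y = top"
  using coatom_le_imp_eq[of x y] by (metis less_imp_le less_irrefl)

lemma sup_coatoms_eq_top:
  assumes "coatom x" "coatom y" "x \<noteq> y"
  shows "sup x y = top"
  using assms coatom_le_imp_eq[OF assms(1) sup_ge1] coatom_le_imp_eq[OF assms(2) sup_ge2] by metis

lemma atom_dual_iff: "atom (dual x) \<longleftrightarrow> coatom (x::'a::complete_lattice)"
proof
  assume x: "atom (dual x)"
  show "coatom x"
    unfolding coatom_def
  proof (intro conjI allI impI)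
    show "x < top"
      using x unfolding atom_def by (metis dual_top_eq less_dual_iff)
    fix y assume "x \<le> y \<and> y < top"
    then have "bot < dual y \<and> dual y \<le> dual x"
      by (metis dual_top_eq less_dual_iff less_eq_dual_iff)
    then show "y = x"
      using x unfolding atom_def by blast
  qed
next
  assume x: "coatom x"
  show "atom (dual x)"
    unfolding atom_def
  proof (intro conjI allI impI)
    show "bot < dual x"
      using x unfolding coatom_def by (metis dual_top_eq less_dual_iff)
    fix y assume "bot < y \<and> y \<le> dual x"
    then have "x \<le> undual y \<and> undual y < top"
      by (metis dual_top_eq dual_undual less_dual_iff less_eq_dual_iff)
    then show "y = dual x"
      using x unfolding coatom_def by (metis dual_undual)
  qed
qed

lemma coatom_dual_iff: "coatom (dual x) \<longleftrightarrow> atom (x::'a::complete_lattice)"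
proof
  assume x: "coatom (dual x)"
  show "atom x"
    unfolding atom_def
  proof (intro conjI allI impI)
    show "bot < x"
      using x unfolding coatom_def by (metis dual_bot_eq less_dual_iff)
    fix y assume "bot < y \<and> y \<le> x"
    then have "dual x \<le> dual y \<and> dual y < top"
      by (metis dual_bot_eq less_dual_iff less_eq_dual_iff)
    then show "y = x"
      using x unfolding coatom_def by blast
  qed
next
  assume x: "atom x"
  show "coatom (dual x)"
    unfolding coatom_def
  proof (intro conjI allI impI)
    show "dual x < top"
      using x unfolding atom_def by (metis dual_bot_eq less_dual_iff)
    fix y assume "dual x \<le> y \<and> y < top"
    then have "bot < undual y \<and> undual y \<le> x"
      by (metis dual_bot_eq dual_undual less_dual_iff less_eq_dual_iff)
    then show "y = dual x"
      using x unfolding atom_def by (metis dual_undual)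
  qed
qed

lemma covers_dual_iff: "covers (dual x) (dual y) \<longleftrightarrow> covers y (x::'a::order)"
proof -
  have "(\<forall>c. dual x \<le> c \<and> c \<le> dual y \<longrightarrow> c = dual x \<or> c = dual y) \<longleftrightarrow>
    (\<forall>c. y \<le> c \<and> c \<le> x \<longrightarrow> c = y \<or> c = x)"
  proof (intro iffI allI impI)
    fix c assume "\<forall>c. dual x \<le> c \<and> c \<le> dual y \<longrightarrow> c = dual x \<or> c = dual y"
      and "y \<le> c \<and> c \<le> x"
    then show "c = y \<or> c = x"
      by (auto dest: spec[of _ "dual c"])
  next
    fix c assume "\<forall>c. y \<le> c \<and> c \<le> x \<longrightarrow> c = y \<or> c = x"
      and "dual x \<le> c \<and> c \<le> dual y"
    then show "c = dual x \<or> c = dual y"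
      by (cases c) (auto dest: spec[of _ "undual c"])
  qed
  then show ?thesis
    unfolding covers_def by auto
qed

lemma atomistic_leI:
  fixes a b :: "'a::complete_lattice"
  assumes "atomistic TYPE('a)" and "\<And>p. atom p \<Longrightarrow> p \<le> a \<Longrightarrow> p \<le> b"
  shows "a \<le> b"
proof -
  have "a = Sup (atoms_below a)"
    using assms(1) unfolding atomistic_def by blast
  also have "\<dots> \<le> b"
    using assms(2) by (auto intro!: Sup_least)
  finally show ?thesis .
qed

lemma atomistic_obtain_atom:
  fixes a b :: "'a::complete_lattice"
  assumes "atomistic TYPE('a)" and "\<not> a \<le> b"
  obtains p where "atom p" "p \<le> a" "\<not> p \<le> b"
  using atomistic_leI[OF assms(1), of a b] assms(2) by blast

lemma covers_inf_coatoms: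
  fixes x y :: "'a::complete_lattice"
  assumes "covering_property TYPE('a dual)" "coatom x" "coatom y" "x \<noteq> y"
  shows "covers (inf x y) x"
proof -
  have "\<not> x \<le> y"
    using coatom_le_imp_eq[OF assms(2) _ coatom_neq_top[OF assms(3)]] assms(4) by blast
  then have "\<not> dual y \<le> dual x"
    by simp
  moreover have "atom (dual y)"
    using assms(3) by (simp add: atom_dual_iff)
  ultimately have "covers (dual x) (sup (dual x) (dual y))"
    using assms(1) unfolding covering_property_def by blast
  then have "covers (dual x) (dual (inf x y))"
    by (simp only: dual_inf_eq)
  then show ?thesis
    by (simp only: covers_dual_iff)
qed

lemma coatoms_above_eq_if_pairwise_inf:
  fixes m :: "'a::complete_lattice"
  assumes "atomistic TYPE('a)" "covering_property TYPE('a dual)"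
    and "C \<subseteq> Coatoms"
    and inf_eq: "\<And>x y. x \<in> C \<Longrightarrow> y \<in> C \<Longrightarrow> x \<noteq> y \<Longrightarrow> inf x y = m"
    and other: "\<And>x. \<exists>y\<in>C. y \<noteq> x"
    and atom_le: "\<And>p. atom p \<Longrightarrow> \<not> p \<le> m \<Longrightarrow> \<exists>x\<in>C. p \<le> x"
  shows "coatoms_above m = C"
proof -
  have m_covered: "covers m x" if "x \<in> C" for x
  proof -
    obtain y where "y \<in> C" "y \<noteq> x"
      using other by blast
    moreover have "coatom x" "coatom y"
      using that \<open>y \<in> C\<close> assms(3) by auto
    ultimately show ?thesis
      using covers_inf_coatoms[OF assms(2)] inf_eq[OF that] by metis
  qed
  have "\<not> coatom m"
  proof
    assume "coatom m"
    obtain x where x: "x \<in> C"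
      using other by blast
    then have "m < x"
      using m_covered by (simp add: covers_def)
    then have "x = top"
      using \<open>coatom m\<close> coatom_less_imp_top by blast
    moreover have "coatom x"
      using x assms(3) by auto
    ultimately show False
      using coatom_neq_top by blast
  qed
  show ?thesis
  proof (intro equalityI subsetI)
    fix w assume "w \<in> coatoms_above m"
    then have w: "coatom w" "m \<le> w"
      by auto
    with \<open>\<not> coatom m\<close> have "\<not> w \<le> m"
      using order_antisym by blast
    then obtain p where p: "atom p" "p \<le> w" "\<not> p \<le> m"
      using atomistic_obtain_atom[OF assms(1)] by blast
    then obtain x where x: "x \<in> C" "p \<le> x"
      using atom_le by blast
    have "sup m p \<noteq> m"
      using p(3) sup.absorb_iff1 by metis
    moreover have "sup m p \<le> x"
      using m_covered[OF x(1)] x(2) by (simp add: covers_def less_imp_le)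
    ultimately have "sup m p = x"
      using m_covered[OF x(1)] sup_ge1[of m p] unfolding covers_def by blast
    then have "x \<le> w"
      using w(2) p(2) by auto
    moreover have "coatom x"
      using x(1) assms(3) by auto
    ultimately show "w \<in> C"
      using x(1) coatom_le_imp_eq coatom_neq_top[OF w(1)] by metis
  next
    fix x assume "x \<in> C"
    then show "x \<in> coatoms_above m"
      using m_covered assms(3) unfolding covers_def by (auto intro: less_imp_le)
  qed
qed

lemma chain_of_length_mono:
  assumes "chain_of_length S n" "k \<le> n"
  shows "chain_of_length S k"
proof -
  obtain c where "\<forall>i\<le>n. c i \<in> S" "\<forall>i<n. c i < c (Suc i)"
    using assms(1) unfolding chain_of_length_def by blast
  then have "(\<forall>i\<le>k. c i \<in> S) \<and> (\<forall>i<k. c i < c (Suc i))"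
    using assms(2) by simp
  then show ?thesis
    unfolding chain_of_length_def by blast
qed

text \<open>The hypothesis \<open>0 < n\<close> is needed: the empty set has length 0 but no chain of length 0.\<close>

lemma set_length_eq_enatD:
  assumes "set_length S = enat n" "0 < n"
  shows "chain_of_length S n" "\<not> chain_of_length S (Suc n)"
proof -
  show "\<not> chain_of_length S (Suc n)"
  proof
    assume "chain_of_length S (Suc n)"
    then have "enat (Suc n) \<le> set_length S"
      unfolding set_length_def by (auto intro!: Sup_upper)
    with assms(1) show False
      by simp
  qed
  show "chain_of_length S n"
  proof (rule ccontr)
    assume "\<not> chain_of_length S n"
    then have "k \<le> n - 1" if "chain_of_length S k" for k
      using that chain_of_length_mono[of S k n] by (cases "n \<le> k") auto
    then have "set_length S \<le> enat (n - 1)"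
      unfolding set_length_def by (auto intro!: Sup_least)
    with assms show False
      by simp
  qed
qed

lemma chain_of_length_dual_image: "chain_of_length (dual ` S) n \<longleftrightarrow> chain_of_length S n"
proof
  assume "chain_of_length (dual ` S) n"
  then obtain c where c: "\<forall>i\<le>n. c i \<in> dual ` S" "\<forall>i<n. c i < c (Suc i)"
    unfolding chain_of_length_def by blast
  have "undual (c (n - i)) < undual (c (n - Suc i))" if "i < n" for i
  proof -
    have "n - i = Suc (n - Suc i)" "n - Suc i < n"
      using that by auto
    then have "c (n - Suc i) < c (n - i)"
      using c(2) by simp
    then show ?thesis
      using dual_less_iff by blast
  qed
  moreover have "\<forall>i\<le>n. undual (c i) \<in> S"
    using c(1) by force
  ultimately show "chain_of_length S n"
    unfolding chain_of_length_def by (intro exI[of _ "\<lambda>i. undual (c (n - i))"]) auto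
next
  assume "chain_of_length S n"
  then obtain c where c: "\<forall>i\<le>n. c i \<in> S" "\<forall>i<n. c i < c (Suc i)"
    unfolding chain_of_length_def by blast
  have "dual (c (n - i)) < dual (c (n - Suc i))" if "i < n" for i
  proof -
    have "n - i = Suc (n - Suc i)" "n - Suc i < n"
      using that by auto
    then show ?thesis
      using c(2) by simp
  qed
  with c(1) show "chain_of_length (dual ` S) n"
    unfolding chain_of_length_def by (intro exI[of _ "\<lambda>i. dual (c (n - i))"]) auto
qed

lemma set_length_dual_image: "set_length (dual ` S) = set_length S"
  by (simp add: set_length_def chain_of_length_dual_image)

section \<open>Coatoms of the tensor product\<close>

lemma Cl_psupset_eq_Atoms:
  fixes v :: "'a::complete_lattice"
  assumes "atomistic TYPE('a)" "A \<in> Cl (Coatoms \<union> {top})" "v \<in> Coatoms \<union> {top}"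
    and "atoms_below v \<subset> A"
  shows "A = Atoms"
proof -
  obtain u where u: "u \<in> Coatoms \<union> {top}" "A = atoms_below u"
    using assms(2) unfolding Cl_def by blast
  have "v \<le> u"
  proof (rule atomistic_leI[OF assms(1)])
    fix p assume "atom p" "p \<le> v"
    then show "p \<le> u"
      using assms(4) u(2) by auto
  qed
  moreover have "v \<noteq> u"
    using assms(4) u(2) by blast
  ultimately have "v < u"
    by simp
  then have "u = top"
    using assms(3) coatom_less_imp_top by auto
  then show ?thesis
    using u(2) by simp
qed

lemma Sigma'_tensorD:
  assumes "R \<in> Sigma'_tensor"
  shows "R \<subset> Atoms \<times> Atoms"
    and "atom p \<Longrightarrow> atom q \<Longrightarrow> {p'. (p', q) \<in> R} \<in> Cl (Coatoms \<union> {top})"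
    and "atom p \<Longrightarrow> atom q \<Longrightarrow> {q'. (p, q') \<in> R} \<in> Cl (Coatoms \<union> {top})"
  using assms unfolding Sigma'_tensor_def mem_Collect_eq mem_Atoms[symmetric] by blast+

lemma tensor_coatomI:
  assumes "X \<in> Sigma'_tensor" and maximal: "\<And>R. R \<in> Sigma'_tensor \<Longrightarrow> X \<subseteq> R \<Longrightarrow> R = X"
  shows "tensor_coatom X"
  unfolding tensor_coatom_def
proof (intro conjI ballI impI)
  have "X \<subset> Atoms \<times> Atoms"
    using Sigma'_tensorD(1)[OF assms(1)] .
  then have "X = (Atoms \<times> Atoms) \<inter> \<Inter>{X}"
    by blast
  then show "X \<in> tensor"
    unfolding tensor_def using assms(1) by blast
  show "X \<noteq> Atoms \<times> Atoms"
    using \<open>X \<subset> Atoms \<times> Atoms\<close> by blast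
next
  fix Y assume "Y \<in> tensor" "X \<subseteq> Y"
  then obtain \<omega> where \<omega>: "Y = (Atoms \<times> Atoms) \<inter> \<Inter>\<omega>" "\<omega> \<subseteq> Sigma'_tensor \<union> {Atoms \<times> Atoms}"
    unfolding tensor_def by blast
  have \<omega>_cases: "R = X \<or> R = Atoms \<times> Atoms" if "R \<in> \<omega>" for R
  proof -
    have "X \<subseteq> R"
      using \<open>X \<subseteq> Y\<close> \<omega>(1) that by blast
    then show ?thesis
      using \<omega>(2) that maximal by blast
  qed
  show "Y = X \<or> Y = Atoms \<times> Atoms"
  proof (cases "X \<in> \<omega>")
    case True
    then have "Y \<subseteq> X"
      using \<omega>(1) by blast
    then show ?thesis
      using \<open>X \<subseteq> Y\<close> by blast
  next
    case False
    then have "Atoms \<times> Atoms \<subseteq> \<Inter>\<omega>"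
      using \<omega>_cases by blast
    then show ?thesis
      using \<omega>(1) by blast
  qed
qed

section \<open>Arrows into a dual lattice\<close>

text \<open>For \<open>g a = undual (f a)\<close> this is the residual \<open>resid f (dual b)\<close>.\<close>

definition antitone_adjoint :: "('a::complete_lattice \<Rightarrow> 'b::complete_lattice) \<Rightarrow> 'b \<Rightarrow> 'a" where
  "antitone_adjoint g b = Sup {a. b \<le> g a}"

definition polar_rel :: "('a::complete_lattice \<Rightarrow> 'b::complete_lattice) \<Rightarrow> ('a \<times> 'b) set" where
  "polar_rel g = (\<Union>p\<in>Atoms. {p} \<times> atoms_below (g p))"

lemma mem_polar_rel: "(p, q) \<in> polar_rel g \<longleftrightarrow> atom p \<and> atom q \<and> q \<le> g p"
  by (auto simp: polar_rel_def)

text \<open>An arrow \<open>f\<close> of \<open>Cal0Sym\<close> from \<open>'a\<close> to the dual of \<open>'b\<close>, read as the map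
  \<open>\<lambda>a. undual (f a)\<close> into \<open>'b\<close> (see \<open>Cal0Sym_op_arrow_undual\<close>).\<close>

locale Cal0Sym_op_arrow =
  fixes g :: "'a::complete_lattice \<Rightarrow> 'b::complete_lattice"
  assumes g_Sup: "g (Sup S) = Inf (g ` S)"
    and g_atom: "atom p \<Longrightarrow> coatom (g p) \<or> g p = top"
    and adjoint_atom: "atom q \<Longrightarrow> coatom (antitone_adjoint g q) \<or> antitone_adjoint g q = top"
begin

abbreviation adj :: "'b \<Rightarrow> 'a" where
  "adj \<equiv> antitone_adjoint g"

lemma g_sup: "g (sup a b) = inf (g a) (g b)"
  using g_Sup[of "{a, b}"] by simp

lemma g_bot: "g bot = top"
  using g_Sup[of "{}"] by simp

lemma g_antimono:
  assumes "a \<le> b"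
  shows "g b \<le> g a"
proof -
  have "g b = inf (g a) (g b)"
    using g_sup[of a b] sup.absorb2[OF assms] by simp
  then show ?thesis
    using inf.cobounded1[of "g a" "g b"] by simp
qed

lemma le_adj_iff: "a \<le> adj b \<longleftrightarrow> b \<le> g a"
proof
  have "b \<le> g (adj b)"
    unfolding antitone_adjoint_def g_Sup by (auto intro: Inf_greatest)
  then show "a \<le> adj b \<Longrightarrow> b \<le> g a"
    using g_antimono order_trans by blast
next
  show "b \<le> g a \<Longrightarrow> a \<le> adj b"
    unfolding antitone_adjoint_def by (auto intro: Sup_upper)
qed

lemma le_g_adj: "b \<le> g (adj b)"
  using le_adj_iff by blast

lemma le_adj_top_iff: "a \<le> adj top \<longleftrightarrow> g a = top"
  by (simp add: le_adj_iff top_unique)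

lemma adj_sup: "adj (sup b c) = inf (adj b) (adj c)"
proof -
  have "a \<le> adj (sup b c) \<longleftrightarrow> a \<le> inf (adj b) (adj c)" for a
    by (simp add: le_adj_iff)
  from this[of "adj (sup b c)"] this[of "inf (adj b) (adj c)"] show ?thesis
    by (simp add: order_antisym)
qed

lemma g_adj:
  assumes "b \<in> range g"
  shows "g (adj b) = b"
proof -
  obtain a where a: "b = g a"
    using assms by blast
  then have "a \<le> adj b"
    by (simp add: le_adj_iff)
  then have "g (adj b) \<le> b"
    using a g_antimono by simp
  moreover have "b \<le> g (adj b)"
    by (rule le_g_adj)
  ultimately show ?thesis
    by (rule order_antisym)
qed

lemma g_top_le: "b \<in> range g \<Longrightarrow> g top \<le> b"
  using g_antimono by auto

lemma atom_g_mem: "atom p \<Longrightarrow> g p \<in> Coatoms \<union> {top}"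
  using g_atom by auto

lemma atom_adj_mem: "atom q \<Longrightarrow> adj q \<in> Coatoms \<union> {top}"
  using adjoint_atom by auto

lemma polar_rel_column: "atom p \<Longrightarrow> {q. (p, q) \<in> polar_rel g} = atoms_below (g p)"
  by (auto simp: mem_polar_rel)

lemma polar_rel_row: "atom q \<Longrightarrow> {p. (p, q) \<in> polar_rel g} = atoms_below (adj q)"
  by (auto simp: mem_polar_rel le_adj_iff)

lemma polar_rel_in_Sigma'_tensor:
  assumes "atomistic TYPE('b)" "atom p\<^sub>0" "g p\<^sub>0 \<noteq> top"
  shows "polar_rel g \<in> Sigma'_tensor"
  unfolding Sigma'_tensor_def Cl_def
proof (intro CollectI conjI ballI)
  obtain q\<^sub>0 where "atom q\<^sub>0" "\<not> q\<^sub>0 \<le> g p\<^sub>0"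
    using atomistic_obtain_atom[OF assms(1), of top "g p\<^sub>0"] assms(3) top_unique by blast
  then have "(p\<^sub>0, q\<^sub>0) \<in> Atoms \<times> Atoms - polar_rel g"
    using assms(2) by (simp add: mem_polar_rel)
  moreover have "polar_rel g \<subseteq> Atoms \<times> Atoms"
    by (auto simp: polar_rel_def)
  ultimately show "polar_rel g \<subset> Atoms \<times> Atoms"
    by blast
next
  fix p :: 'a and q :: 'b
  assume "p \<in> Atoms" "q \<in> Atoms"
  then have "atom p" "atom q"
    by auto
  show "{p'. (p', q) \<in> polar_rel g} \<in> atoms_below ` (Coatoms \<union> {top})"
    unfolding polar_rel_row[OF \<open>atom q\<close>] using atom_adj_mem[OF \<open>atom q\<close>] by (rule imageI)
  show "{q'. (p, q') \<in> polar_rel g} \<in> atoms_below ` (Coatoms \<union> {top})"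
    unfolding polar_rel_column[OF \<open>atom p\<close>] using atom_g_mem[OF \<open>atom p\<close>] by (rule imageI)
qed

lemma Sigma'_tensor_cross_full:
  assumes "atomistic TYPE('a)" "atomistic TYPE('b)"
    and R: "R \<in> Sigma'_tensor" "polar_rel g \<subseteq> R"
    and pq: "(p, q) \<in> R" "(p, q) \<notin> polar_rel g"
    and "atom p'" "atom q'"
  shows "(p, q') \<in> R" "(p', q) \<in> R"
proof -
  have "atom p" "atom q"
    using Sigma'_tensorD(1)[OF R(1)] pq(1) by auto
  note fibres = Sigma'_tensorD(3)[OF R(1) this] Sigma'_tensorD(2)[OF R(1) this]
  have "atoms_below (g p) \<subseteq> {q'. (p, q') \<in> R}"
    using R(2) \<open>atom p\<close> by (auto simp: mem_polar_rel)
  moreover have "q \<in> {q'. (p, q') \<in> R} - atoms_below (g p)"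
    using pq \<open>atom p\<close> \<open>atom q\<close> by (simp add: mem_polar_rel)
  ultimately have "atoms_below (g p) \<subset> {q'. (p, q') \<in> R}"
    by blast
  then have "{q'. (p, q') \<in> R} = Atoms"
    by (rule Cl_psupset_eq_Atoms[OF assms(2) fibres(1) atom_g_mem[OF \<open>atom p\<close>]])
  then show "(p, q') \<in> R"
    using \<open>atom q'\<close> mem_Atoms[of q'] by blast
  have "atoms_below (adj q) \<subseteq> {p'. (p', q) \<in> R}"
    using R(2) \<open>atom q\<close> by (auto simp: mem_polar_rel le_adj_iff)
  moreover have "p \<in> {p'. (p', q) \<in> R} - atoms_below (adj q)"
    using pq \<open>atom p\<close> \<open>atom q\<close> by (simp add: mem_polar_rel le_adj_iff)
  ultimately have "atoms_below (adj q) \<subset> {p'. (p', q) \<in> R}"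
    by blast
  then have "{p'. (p', q) \<in> R} = Atoms"
    by (rule Cl_psupset_eq_Atoms[OF assms(1) fibres(2) atom_adj_mem[OF \<open>atom q\<close>]])
  then show "(p', q) \<in> R"
    using \<open>atom p'\<close> mem_Atoms[of p'] by blast
qed

lemma polar_rel_maximal:
  assumes "atomistic TYPE('a)" "atomistic TYPE('b)"
    and two_coatoms: "\<And>x y :: 'b. coatom x \<Longrightarrow> coatom y \<Longrightarrow> atoms_below x \<union> atoms_below y \<noteq> Atoms"
    and R: "R \<in> Sigma'_tensor" "polar_rel g \<subseteq> R"
  shows "R = polar_rel g"
proof (rule ccontr)
  note cross = Sigma'_tensor_cross_full[OF assms(1,2) R]
  assume "R \<noteq> polar_rel g"
  then obtain p q where pq: "(p, q) \<in> R" "(p, q) \<notin> polar_rel g"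
    using R(2) by auto
  have "atom p" "atom q"
    using Sigma'_tensorD(1)[OF R(1)] pq(1) by auto
  then have "coatom (g p)"
    using pq(2) g_atom[OF \<open>atom p\<close>] by (auto simp: mem_polar_rel)
  have "(p', q') \<in> R" if "atom p'" "atom q'" for p' q'
  proof (cases "(p', q') \<in> polar_rel g")
    case True
    then show ?thesis
      using R(2) by blast
  next
    case False
    then have "coatom (g p')"
      using g_atom[OF \<open>atom p'\<close>] \<open>atom p'\<close> \<open>atom q'\<close> by (auto simp: mem_polar_rel)
    \<comment> \<open>an atom below neither \<open>g p\<close> nor \<open>g p'\<close> carries the full row of \<open>p\<close> over to \<open>p'\<close>\<close>
    with \<open>coatom (g p)\<close> have "atoms_below (g p) \<union> atoms_below (g p') \<noteq> Atoms"
      using two_coatoms by blast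
    moreover have "atoms_below (g p) \<union> atoms_below (g p') \<subseteq> Atoms"
      by auto
    ultimately obtain q'' where "q'' \<in> Atoms" "q'' \<notin> atoms_below (g p) \<union> atoms_below (g p')"
      by blast
    then have q'': "atom q''" "\<not> q'' \<le> g p" "\<not> q'' \<le> g p'"
      by auto
    have "(p, q'') \<in> R"
      using cross(1)[OF pq \<open>atom p'\<close> \<open>atom q''\<close>] .
    moreover have "(p, q'') \<notin> polar_rel g"
      using q'' by (simp add: mem_polar_rel)
    ultimately have "(p', q'') \<in> R"
      using cross(2) q''(1) \<open>atom p'\<close> by blast
    moreover have "(p', q'') \<notin> polar_rel g"
      using q'' by (simp add: mem_polar_rel)
    ultimately show "(p', q') \<in> R"
      using cross(1) that by blast
  qed
  then have "Atoms \<times> Atoms \<subseteq> R"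
    by auto
  then show False
    using Sigma'_tensorD(1)[OF R(1)] by blast
qed

lemma tensor_coatom_polar_rel:
  assumes "atomistic TYPE('a)" "atomistic TYPE('b)"
    and "\<And>x y :: 'b. coatom x \<Longrightarrow> coatom y \<Longrightarrow> atoms_below x \<union> atoms_below y \<noteq> Atoms"
    and "atom p\<^sub>0" "g p\<^sub>0 \<noteq> top"
  shows "tensor_coatom (polar_rel g)"
  using polar_rel_in_Sigma'_tensor[OF assms(2,4,5)] polar_rel_maximal[OF assms(1-3)]
  by (rule tensor_coatomI)

end

lemma Cal0Sym_op_arrow_undual:
  fixes f :: "'a::complete_lattice \<Rightarrow> 'b::complete_lattice dual"
  assumes "Cal0Sym_arrow f"
  shows "Cal0Sym_op_arrow (\<lambda>a. undual (f a))"
proof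
  fix S :: "'a set"
  show "undual (f (Sup S)) = Inf ((\<lambda>a. undual (f a)) ` S)"
    using assms unfolding Cal0Sym_arrow_def by (simp add: image_image)
next
  fix p :: 'a assume "atom p"
  then have "atom (f p) \<or> f p = bot"
    using assms unfolding Cal0Sym_arrow_def by blast
  then show "coatom (undual (f p)) \<or> undual (f p) = top"
    using atom_dual_iff[of "undual (f p)"] by auto
next
  fix q :: 'b assume "atom q"
  then have "coatom (resid f (dual q)) \<or> resid f (dual q) = top"
    using assms coatom_dual_iff unfolding Cal0Sym_arrow_def by blast
  moreover have "f a \<le> dual q \<longleftrightarrow> q \<le> undual (f a)" for a
    by (subst dual_less_eq_iff) simp
  then have "resid f (dual q) = antitone_adjoint (\<lambda>a. undual (f a)) q"
    unfolding resid_def antitone_adjoint_def by simp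
  ultimately show "coatom (antitone_adjoint (\<lambda>a. undual (f a)) q) \<or>
      antitone_adjoint (\<lambda>a. undual (f a)) q = top"
    by simp
qed

section \<open>Arrows whose image has length two\<close>

definition star_coatom :: "('a::complete_lattice \<times> 'b::complete_lattice) set \<Rightarrow> bool" where
  "star_coatom X \<longleftrightarrow>
    (\<exists>x1 y1 :: 'a. \<exists>x2 y2 :: 'b. \<exists>h.
       coatom x1 \<and> coatom y1 \<and> x1 \<noteq> y1 \<and>
       coatom x2 \<and> coatom y2 \<and> x2 \<noteq> y2 \<and>
       bij_betw h (coatoms_above (inf x1 y1)) (coatoms_above (inf x2 y2)) \<and>
       X = (\<Union>z\<in>coatoms_above (inf x1 y1). atoms_below z \<times> atoms_below (h z)))"

locale length_two_op_arrow = Cal0Sym_op_arrow g for g :: "'a::complete_lattice \<Rightarrow> 'b::complete_lattice" +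
  assumes atomistic_a: "atomistic TYPE('a)" and atomistic_b: "atomistic TYPE('b)"
    and covering_a: "covering_property TYPE('a dual)"
    and covering_b: "covering_property TYPE('b dual)"
    and length_range: "set_length (range g) = 2"
begin

definition coatom_image :: "'b set" where
  "coatom_image = range g \<inter> Coatoms"

lemma range_chains: "chain_of_length (range g) 2" "\<not> chain_of_length (range g) 3"
  using set_length_eq_enatD[of "range g" 2] length_range by (simp_all add: numeral_eq_enat)

lemma obtain_atom_g_neq_top:
  assumes "g a \<noteq> top"
  obtains p where "atom p" "p \<le> a" "g p \<noteq> top"
proof -
  have "\<not> a \<le> adj top"
    using assms by (simp add: le_adj_top_iff)
  then show ?thesis
    using that atomistic_obtain_atom[OF atomistic_a] le_adj_top_iff by metis
qed

lemma g_cases: "g a = top \<or> g a = g top \<or> coatom (g a)"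
proof (rule ccontr)
  assume "\<not> ?thesis"
  then have a: "g a \<noteq> top" "g a \<noteq> g top" "\<not> coatom (g a)"
    by auto
  obtain p where p: "atom p" "p \<le> a" "g p \<noteq> top"
    using a(1) by (rule obtain_atom_g_neq_top)
  then have "coatom (g p)"
    using g_atom by blast
  \<comment> \<open>a value of a fourth kind yields the chain \<open>g top < g a < g p < g bot\<close> of length 3\<close>
  have "g top < g a"
    using a(2) g_antimono[of a top] by simp
  moreover have "g a < g p"
    using g_antimono[OF p(2)] a(3) \<open>coatom (g p)\<close> by (metis order.not_eq_order_implies_strict)
  moreover have "g p < g bot"
    using \<open>coatom (g p)\<close> g_bot by (simp add: coatom_def)
  ultimately have "chain_of_length (range g) 3"
    unfolding chain_of_length_def
    by (intro exI[of _ "\<lambda>i. g ([top, a, p, bot] ! i)"]) (auto simp: less_Suc_eq numeral_3_eq_3)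
  then show False
    using range_chains(2) by blast
qed

lemma g_top_eq_Inf_atoms: "g top = Inf (g ` Atoms)"
proof -
  have "(top::'a) = Sup (atoms_below top)"
    using atomistic_a unfolding atomistic_def by blast
  then show ?thesis
    by (metis atoms_below_top g_Sup)
qed

lemma g_top_neq_top: "g top \<noteq> top" and not_coatom_g_top: "\<not> coatom (g top)"
proof -
  obtain c where c: "\<forall>i\<le>2. c i \<in> range g" "\<forall>i<2. c i < c (Suc i)"
    using range_chains(1) unfolding chain_of_length_def by blast
  then obtain a where a: "c 0 = g a"
    by auto
  have "c 0 < c 1" "c 1 < c 2"
    using c(2) by (auto simp: numeral_2_eq_2)
  then have lt: "g a < c 1" "c 1 < top"
    using a order.strict_trans2[OF _ top_greatest] by auto
  moreover have not_coatom: "\<not> coatom (g a)"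
    using lt coatom_less_imp_top[of "g a" "c 1"] by auto
  ultimately have "g a = g top"
    using g_cases[of a] by auto
  with lt not_coatom show "g top \<noteq> top" "\<not> coatom (g top)"
    by auto
qed

lemma ex_coatom_image_neq: "\<exists>y\<in>coatom_image. y \<noteq> x"
proof (rule ccontr)
  assume "\<not> ?thesis"
  then have "coatom (g p) \<Longrightarrow> g p = x" for p
    unfolding coatom_image_def by auto
  then have "x \<le> g p" if "atom p" for p
    using g_atom[OF that] by auto
  then have "x \<le> g top"
    unfolding g_top_eq_Inf_atoms by (auto intro: Inf_greatest)
  obtain p where p: "atom p" "g p \<noteq> top"
    using g_top_neq_top by (rule obtain_atom_g_neq_top)
  then have "coatom (g p)" "g p = x"
    using g_atom \<open>coatom (g p) \<Longrightarrow> g p = x\<close> by blast+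
  moreover have "g top \<le> g p"
    using g_antimono by simp
  ultimately have "g top = x"
    using \<open>x \<le> g top\<close> by simp
  with \<open>coatom (g p)\<close> \<open>g p = x\<close> show False
    using not_coatom_g_top by simp
qed

lemma coatom_imageI: "coatom (g a) \<Longrightarrow> g a \<in> coatom_image"
  by (simp add: coatom_image_def)

lemma coatom_imageE:
  assumes "x \<in> coatom_image"
  obtains a where "x = g a" "coatom x"
  using assms unfolding coatom_image_def by auto

lemma obtain_two_coatom_image:
  obtains x y where "x \<in> coatom_image" "y \<in> coatom_image" "x \<noteq> y"
  using ex_coatom_image_neq ex_coatom_image_neq[of top] by metis

lemma inf_coatom_image:
  assumes "x \<in> coatom_image" "y \<in> coatom_image" "x \<noteq> y"
  shows "inf x y = g top"
proof -
  obtain a b where ab: "x = g a" "y = g b" and "coatom x" "coatom y"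
    using assms(1,2) by (metis coatom_imageE)
  have "inf x y \<noteq> top"
    using \<open>coatom x\<close> coatom_neq_top inf.cobounded1[of x y] top_unique by auto
  moreover have "\<not> coatom (inf x y)"
  proof
    assume "coatom (inf x y)"
    have "x = inf x y"
      by (rule coatom_le_imp_eq[OF \<open>coatom (inf x y)\<close> inf.cobounded1 coatom_neq_top[OF \<open>coatom x\<close>]])
    moreover have "y = inf x y"
      by (rule coatom_le_imp_eq[OF \<open>coatom (inf x y)\<close> inf.cobounded2 coatom_neq_top[OF \<open>coatom y\<close>]])
    ultimately show False
      using assms(3) by simp
  qed
  ultimately show ?thesis
    using g_cases[of "sup a b"] ab by (auto simp: g_sup)
qed

lemma coatom_image_le:
  assumes "x \<in> coatom_image" "b \<in> range g" "q \<le> x" "q \<le> b" "\<not> q \<le> g top"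
  shows "x \<le> b"
proof -
  obtain a where a: "b = g a"
    using assms(2) by blast
  consider "b = top" | "b = g top" | "coatom b"
    using g_cases[of a] a by auto
  then show ?thesis
  proof cases
    case 3
    then have "b \<in> coatom_image"
      using a coatom_imageI by simp
    have "x = b"
    proof (rule ccontr)
      assume "x \<noteq> b"
      then have "q \<le> g top"
        using inf_coatom_image[OF assms(1) \<open>b \<in> coatom_image\<close>] assms(3,4) le_inf_iff by metis
      with assms(5) show False
        by simp
    qed
    then show ?thesis
      by simp
  qed (use assms in auto)
qed

lemma coatom_adj:
  assumes "x \<in> coatom_image"
  shows "coatom (adj x)"
proof -
  have "coatom x" "x \<in> range g"
    using assms by (auto elim: coatom_imageE)
  then have "x \<noteq> g top"
    using not_coatom_g_top by auto
  then have "\<not> x \<le> g top"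
    using g_top_le[OF \<open>x \<in> range g\<close>] by simp
  then obtain q where q: "atom q" "q \<le> x" "\<not> q \<le> g top"
    using atomistic_obtain_atom[OF atomistic_b] by blast
  have "adj x \<le> adj q"
    using q(2) g_adj[OF \<open>x \<in> range g\<close>] by (simp add: le_adj_iff)
  moreover have "adj q \<le> adj x"
    using coatom_image_le[OF assms _ q(2) _ q(3)] le_adj_iff by auto
  moreover have "adj q \<noteq> top"
    using q(3) le_adj_iff[of top q] by auto
  ultimately show ?thesis
    using adjoint_atom[OF q(1)] by simp
qed

lemma inf_adj_coatom_image:
  assumes "x \<in> coatom_image" "y \<in> coatom_image" "x \<noteq> y"
  shows "inf (adj x) (adj y) = adj top"
  using assms sup_coatoms_eq_top adj_sup by (metis coatom_imageE)

lemma atom_le_coatom_image: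
  assumes "atom q"
  shows "\<exists>x\<in>coatom_image. q \<le> x"
proof (cases "q \<le> g top")
  case True
  obtain x where x: "x \<in> coatom_image"
    using ex_coatom_image_neq by blast
  then have "x \<in> range g"
    by (simp add: coatom_image_def)
  then have "q \<le> x"
    using True g_top_le order_trans by blast
  with x show ?thesis
    by blast
next
  case False
  define r where "r = adj q"
  have "coatom r"
    using adjoint_atom[OF assms] False le_adj_iff[of top q] by (auto simp: r_def)
  have "q \<le> g r"
    unfolding r_def by (rule le_g_adj)
  have "g r \<noteq> top"
  proof
    assume "g r = top"
    obtain x where x: "x \<in> coatom_image"
      using ex_coatom_image_neq by blast
    have "r \<le> adj x"
      using \<open>g r = top\<close> by (simp add: le_adj_iff)
    then have "adj x = r"
      using coatom_le_imp_eq[OF \<open>coatom r\<close>] coatom_neq_top[OF coatom_adj[OF x]] by blast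
    then have "x = top"
      using g_adj x \<open>g r = top\<close> by (auto simp: coatom_image_def)
    with x show False
      by (auto simp: coatom_image_def dest: coatom_neq_top)
  qed
  moreover have "g r \<noteq> g top"
    using False \<open>q \<le> g r\<close> by auto
  ultimately have "g r \<in> coatom_image"
    using g_cases[of r] coatom_imageI by auto
  with \<open>q \<le> g r\<close> show ?thesis
    by blast
qed

lemma coatoms_above_g_top: "coatoms_above (g top) = coatom_image"
proof (rule coatoms_above_eq_if_pairwise_inf[OF atomistic_b covering_b])
  show "coatom_image \<subseteq> Coatoms"
    by (auto simp: coatom_image_def)
qed (use inf_coatom_image ex_coatom_image_neq atom_le_coatom_image in auto)

lemma coatoms_above_adj_top: "coatoms_above (adj top) = adj ` coatom_image"
proof (rule coatoms_above_eq_if_pairwise_inf[OF atomistic_a covering_a])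
  show "adj ` coatom_image \<subseteq> Coatoms"
    using coatom_adj by auto
  show "inf u v = adj top" if "u \<in> adj ` coatom_image" "v \<in> adj ` coatom_image" "u \<noteq> v" for u v
    using that inf_adj_coatom_image by auto
  show "\<exists>v\<in>adj ` coatom_image. v \<noteq> u" for u
  proof -
    obtain x y where "x \<in> coatom_image" "y \<in> coatom_image" "x \<noteq> y"
      by (rule obtain_two_coatom_image)
    then have "adj x \<noteq> adj y"
      using g_adj by (metis coatom_imageE rangeI)
    show ?thesis
    proof (cases "adj x = u")
      case True
      with \<open>y \<in> coatom_image\<close> \<open>adj x \<noteq> adj y\<close> show ?thesis
        by (intro bexI[of _ "adj y"]) auto
    next
      case False
      with \<open>x \<in> coatom_image\<close> show ?thesis
        by (intro bexI[of _ "adj x"]) auto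
    qed
  qed
  show "\<exists>v\<in>adj ` coatom_image. p \<le> v" if "atom p" "\<not> p \<le> adj top" for p
  proof -
    have "g p \<in> coatom_image"
      using that g_atom coatom_imageI le_adj_top_iff by blast
    moreover have "p \<le> adj (g p)"
      by (simp add: le_adj_iff)
    ultimately show ?thesis
      by blast
  qed
qed

lemma bij_betw_g_adj_image: "bij_betw g (adj ` coatom_image) coatom_image"
  by (rule bij_betw_byWitness[where f' = adj]) (auto simp: coatom_image_def g_adj)

lemma polar_rel_eq_UN:
  "polar_rel g = (\<Union>z\<in>adj ` coatom_image. atoms_below z \<times> atoms_below (g z))"
proof (intro set_eqI iffI)
  fix pq assume "pq \<in> polar_rel g"
  then obtain p q where pq: "pq = (p, q)" "atom p" "atom q" "q \<le> g p"
    by (cases pq) (auto simp: mem_polar_rel)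
  obtain x where x: "x \<in> coatom_image" "q \<le> x" "p \<le> adj x"
  proof (cases "g p = top")
    case True
    then show ?thesis
      using that atom_le_coatom_image[OF pq(3)] by (auto simp: le_adj_iff)
  next
    case False
    then show ?thesis
      using that[of "g p"] g_atom[OF pq(2)] coatom_imageI pq(4) by (auto simp: le_adj_iff)
  qed
  then show "pq \<in> (\<Union>z\<in>adj ` coatom_image. atoms_below z \<times> atoms_below (g z))"
    using pq g_adj by (auto simp: coatom_image_def)
next
  fix pq assume "pq \<in> (\<Union>z\<in>adj ` coatom_image. atoms_below z \<times> atoms_below (g z))"
  then obtain x where x: "x \<in> coatom_image" "pq \<in> atoms_below (adj x) \<times> atoms_below (g (adj x))"
    by blast
  moreover have "g (adj x) = x"
    using x(1) g_adj by (simp add: coatom_image_def)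
  ultimately obtain p q where pq: "pq = (p, q)" "atom p" "p \<le> adj x" "atom q" "q \<le> x"
    by auto
  then have "q \<le> g p"
    using le_adj_iff order_trans by blast
  with pq show "pq \<in> polar_rel g"
    by (simp add: mem_polar_rel)
qed

lemma star_coatom_polar_rel: "star_coatom (polar_rel g)"
proof -
  obtain x y where xy: "x \<in> coatom_image" "y \<in> coatom_image" "x \<noteq> y"
    by (rule obtain_two_coatom_image)
  then have "adj x \<noteq> adj y"
    using g_adj by (metis coatom_imageE rangeI)
  moreover have "inf (adj x) (adj y) = adj top" "inf x y = g top"
    using xy inf_adj_coatom_image inf_coatom_image by auto
  ultimately show ?thesis
    unfolding star_coatom_def
    using xy coatom_adj bij_betw_g_adj_image polar_rel_eq_UN coatoms_above_g_top coatoms_above_adj_top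
    by (intro exI[of _ "adj x"] exI[of _ "adj y"] exI[of _ x] exI[of _ y] exI[of _ g])
      (auto simp: coatom_image_def)
qed

end

theorem lemma8p2:
  fixes f :: "'a::complete_lattice \<Rightarrow> 'b::complete_lattice dual"
  assumes "Cal0Sym_obj TYPE('a)" and "Cal0Sym_obj TYPE('b)"
    and "DAC_lattice TYPE('a)" and "DAC_lattice TYPE('b)"
    and "Cal0Sym_arrow f"
    and "set_length (range f) = 2"
  defines "X \<equiv> (\<Union>p\<in>Atoms. {p} \<times> atoms_below (undual (f p)))"
  shows "tensor_coatom X \<and>
    (\<exists>x1 y1 :: 'a. \<exists>x2 y2 :: 'b. \<exists>h.
       coatom x1 \<and> coatom y1 \<and> x1 \<noteq> y1 \<and>
       coatom x2 \<and> coatom y2 \<and> x2 \<noteq> y2 \<and>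
       bij_betw h (coatoms_above (inf x1 y1)) (coatoms_above (inf x2 y2)) \<and>
       X = (\<Union>z\<in>coatoms_above (inf x1 y1). atoms_below z \<times> atoms_below (h z)))"
proof -
  define g where "g = (\<lambda>a. undual (f a))"
  have "range f = dual ` range g"
    by (simp add: g_def image_image)
  then have "set_length (range g) = 2"
    using assms(6) by (simp add: set_length_dual_image)
  moreover have "Cal0Sym_op_arrow g"
    unfolding g_def using assms(5) by (rule Cal0Sym_op_arrow_undual)
  ultimately interpret length_two_op_arrow g
    using assms(3,4) by (simp add: length_two_op_arrow_def length_two_op_arrow_axioms_def DAC_lattice_def)
  have X: "X = polar_rel g"
    by (simp add: X_def g_def polar_rel_def)
  obtain p where "atom p" "g p \<noteq> top"
    using g_top_neq_top by (rule obtain_atom_g_neq_top)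
  then have "tensor_coatom X"
    unfolding X using assms(2) unfolding Cal0Sym_obj_def
    by (intro tensor_coatom_polar_rel[OF atomistic_a atomistic_b]) auto
  moreover have "star_coatom X"
    unfolding X by (rule star_coatom_polar_rel)
  ultimately show ?thesis
    unfolding star_coatom_def by blast
qed

end
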